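(* The category $\mathsf{HSLat}$ of Heyting semilattices does not satisfy condition (W): there exist a Heyting semilattice $A$ and subobjects $X,Y,Z\le A$ with $[X,Y]=0$ but $[X,Y,Z]\neq 0$. Equivalently, there exist subobjects $X,Y\le A$ with $[X,Y]=0$ but $[X^A,Y^A]\neq 0$.
   Context: A Heyting semilattice is a meet-semilattice with top $1$ and an operation $\Rightarrow$ with $x\wedge y\le z$ iff $x\le y\Rightarrow z$; $\mathsf{HSLat}$ is the category of these with morphisms preserving $1,\wedge,\Rightarrow$; it is a semi-abelian category (pointed, Barr-exact, protomodular, with binary coproducts) with zero object $\{1\}$. For objects $X_1,\dots,X_n$ ($n\ge2$) the cosmash product $X_1\diamond\cdots\diamond X_n$ is the kernel of the morphism $X_1+\cdots+X_n\to\prod_{k=1}^n\coprod_{j\ne k}X_j$ whose component to $\coprod_{j\ne k}X_j$ sends $X_l$ by the coproduct injection if $l\neq k$ and is $0$ on $X_k$. For subobjects $x_i\colon X_i\rightarrowtail A$, the Higgins commutator $[X_1,\dots,X_n]$ is the regular (epi-mono) image of $X_1\diamond\cdots\diamond X_n$ under $\langle x_1,\dots,x_n\rangle\colon X_1+\cdots+X_n\to A$. $X^A$ denotes the normal closure of $X$ in $A$ (smallest normal subobject, i.e. kernel, of $A$ containing $X$). Condition (W) for a semi-abelian category: for all subobjects $X,Y,Z\le A$, $[X,Y]=0$ implies $[X,Y,Z]=0$. *)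

theory Defs
  imports Main
begin

record 'a hslat =
  carrier :: "'a set"
  one :: 'a
  meet :: "'a \<Rightarrow> 'a \<Rightarrow> 'a"
  imp :: "'a \<Rightarrow> 'a \<Rightarrow> 'a"

definition leq :: "'a hslat \<Rightarrow> 'a \<Rightarrow> 'a \<Rightarrow> bool" where
  "leq A x y \<longleftrightarrow> meet A x y = x"

definition is_hsl :: "'a hslat \<Rightarrow> bool" where
  "is_hsl A \<longleftrightarrow>
     one A \<in> carrier A \<and>
     (\<forall>x\<in>carrier A. \<forall>y\<in>carrier A. meet A x y \<in> carrier A \<and> imp A x y \<in> carrier A) \<and>
     (\<forall>x\<in>carrier A. meet A x x = x) \<and>
     (\<forall>x\<in>carrier A. \<forall>y\<in>carrier A. meet A x y = meet A y x) \<and>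
     (\<forall>x\<in>carrier A. \<forall>y\<in>carrier A. \<forall>z\<in>carrier A.
        meet A (meet A x y) z = meet A x (meet A y z)) \<and>
     (\<forall>x\<in>carrier A. meet A x (one A) = x) \<and>
     (\<forall>x\<in>carrier A. \<forall>y\<in>carrier A. \<forall>z\<in>carrier A.
        leq A (meet A x y) z \<longleftrightarrow> leq A x (imp A y z))"

text \<open>Subobjects of A are (up to isomorphism) the subalgebras of A.\<close>
definition subalg :: "'a hslat \<Rightarrow> 'a set \<Rightarrow> bool" where
  "subalg A X \<longleftrightarrow> X \<subseteq> carrier A \<and> one A \<in> X \<and>
     (\<forall>x\<in>X. \<forall>y\<in>X. meet A x y \<in> X \<and> imp A x y \<in> X)"

definition hom_on :: "('a \<Rightarrow> 'b) \<Rightarrow> 'a set \<Rightarrow> 'a hslat \<Rightarrow> 'b hslat \<Rightarrow> bool" where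
  "hom_on h X A B \<longleftrightarrow> (\<forall>x\<in>X. h x \<in> carrier B) \<and> h (one A) = one B \<and>
     (\<forall>x\<in>X. \<forall>y\<in>X. h (meet A x y) = meet B (h x) (h y) \<and> h (imp A x y) = imp B (h x) (h y))"

section \<open>Terms (elements of coproducts are represented by terms in generators)\<close>

datatype 'g tm = Gen 'g | One | Meet "'g tm" "'g tm" | Imp "'g tm" "'g tm"

fun gens :: "'g tm \<Rightarrow> 'g set" where
  "gens (Gen g) = {g}"
| "gens One = {}"
| "gens (Meet s t) = gens s \<union> gens t"
| "gens (Imp s t) = gens s \<union> gens t"

fun eval :: "'b hslat \<Rightarrow> ('g \<Rightarrow> 'b) \<Rightarrow> 'g tm \<Rightarrow> 'b" where
  "eval B v (Gen g) = v g"
| "eval B v One = one B"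
| "eval B v (Meet s t) = meet B (eval B v s) (eval B v t)"
| "eval B v (Imp s t) = imp B (eval B v s) (eval B v t)"

text \<open>Generators of the coproduct X_0 + ... + X_(n-1) of subalgebras Xs of A:
  pairs (j, a) with j < n and a in X_j.\<close>
definition copr_gens :: "'a set list \<Rightarrow> (nat \<times> 'a) set" where
  "copr_gens Xs = {(j, a). j < length Xs \<and> a \<in> Xs ! j}"

text \<open>A term t over the generators represents an element of the cosmash product
  iff, for every k, its image in the coproduct of the X_j (j /= k) under the map that
  is 0 on X_k is the zero element 1.  An equation holds in that coproduct iff it holds
  under all homomorphic interpretations of the X_j (j /= k) in all Heyting semilattices;
  since this coproduct is a quotient of the term algebra over (nat \<times> 'a), it suffices
  to let B range over Heyting semilattices with carrier in ((nat \<times> 'a) tm) set.\<close>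
definition in_cosmash :: "'a hslat \<Rightarrow> 'a set list \<Rightarrow> (nat \<times> 'a) tm \<Rightarrow> bool" where
  "in_cosmash A Xs t \<longleftrightarrow> gens t \<subseteq> copr_gens Xs \<and>
     (\<forall>k < length Xs. \<forall>(B :: ((nat \<times> 'a) tm set) hslat) h.
        is_hsl B \<and> (\<forall>j < length Xs. j \<noteq> k \<longrightarrow> hom_on (h j) (Xs ! j) A B) \<longrightarrow>
        eval B (\<lambda>(j, a). if j = k then one B else h j a) t = one B)"

text \<open>Higgins commutator [X_0, ..., X_(n-1)]: image of the cosmash product under
  the map X_0 + ... + X_(n-1) \<rightarrow> A induced by the inclusions.\<close>
definition higgins :: "'a hslat \<Rightarrow> 'a set list \<Rightarrow> 'a set" where
  "higgins A Xs = {eval A (\<lambda>(j, a). a) t | t. in_cosmash A Xs t}"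

text \<open>Congruences of A; normal subobjects (kernels) are exactly the 1-classes of congruences.\<close>
definition congruence :: "'a hslat \<Rightarrow> ('a \<times> 'a) set \<Rightarrow> bool" where
  "congruence A \<theta> \<longleftrightarrow> equiv (carrier A) \<theta> \<and>
     (\<forall>x x' y y'. (x, x') \<in> \<theta> \<longrightarrow> (y, y') \<in> \<theta> \<longrightarrow>
        (meet A x y, meet A x' y') \<in> \<theta> \<and> (imp A x y, imp A x' y') \<in> \<theta>)"

definition normal_closure :: "'a hslat \<Rightarrow> 'a set \<Rightarrow> 'a set" where
  "normal_closure A X = \<Inter>{N. \<exists>\<theta>. congruence A \<theta> \<and> N = {a \<in> carrier A. (a, one A) \<in> \<theta>} \<and> X \<subseteq> N}"

end

theory Submission
  imports Defs
begin

text \<open>Let A be the four-element Boolean algebra 0 < 1, 2 < 3 with a new top 4 adjoined, and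
  X = {1, 4}, Y = {2, 4}, Z = {3, 4}. The subalgebra {0, 1, 2, 4} generated by X and Y is the
  product X \<times> Y, so every element of the cosmash product X \<diamond> Y, being killed by both
  projections, evaluates to 1: [X, Y] = 0. On the other hand the term
  (x \<Rightarrow> z) \<Rightarrow> ((y \<Rightarrow> z) \<Rightarrow> z) collapses to 1 whenever one of x, y, z is replaced by 1,
  so it lies in X \<diamond> Y \<diamond> Z, yet at x = 1, y = 2, z = 3 it evaluates to 3. Since normal
  subobjects are upward closed, 3 lies in both X^A and Y^A, and the cosmash term
  (u \<Rightarrow> v) \<Rightarrow> v at u = v = 3 shows [X^A, Y^A] \<noteq> 0.\<close>

locale heyting_semilattice =
  fixes H :: "'a hslat"
  assumes is_hsl: "is_hsl H"
begin

lemma one_closed: "one H \<in> carrier H"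
  using is_hsl unfolding is_hsl_def by simp

lemma imp_closed: "x \<in> carrier H \<Longrightarrow> y \<in> carrier H \<Longrightarrow> imp H x y \<in> carrier H"
  using is_hsl unfolding is_hsl_def by simp

lemma meet_idem: "x \<in> carrier H \<Longrightarrow> meet H x x = x"
  using is_hsl unfolding is_hsl_def by simp

lemma meet_comm: "x \<in> carrier H \<Longrightarrow> y \<in> carrier H \<Longrightarrow> meet H x y = meet H y x"
  using is_hsl unfolding is_hsl_def by blast

lemma meet_assoc:
  "x \<in> carrier H \<Longrightarrow> y \<in> carrier H \<Longrightarrow> z \<in> carrier H \<Longrightarrow>
   meet H (meet H x y) z = meet H x (meet H y z)"
  using is_hsl unfolding is_hsl_def by blast

lemma meet_one_right: "x \<in> carrier H \<Longrightarrow> meet H x (one H) = x"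
  using is_hsl unfolding is_hsl_def by simp

lemma meet_one_left: "x \<in> carrier H \<Longrightarrow> meet H (one H) x = x"
  using meet_comm meet_one_right one_closed by metis

lemma leq_meet_iff_leq_imp:
  "x \<in> carrier H \<Longrightarrow> y \<in> carrier H \<Longrightarrow> z \<in> carrier H \<Longrightarrow>
   leq H (meet H x y) z \<longleftrightarrow> leq H x (imp H y z)"
  using is_hsl unfolding is_hsl_def by blast

lemma leq_refl: "x \<in> carrier H \<Longrightarrow> leq H x x"
  unfolding leq_def by (rule meet_idem)

lemma one_leq_imp_eq_one: "x \<in> carrier H \<Longrightarrow> leq H (one H) x \<Longrightarrow> x = one H"
  unfolding leq_def using meet_one_left by simp

lemma imp_eq_one_if_leq:
  assumes x: "x \<in> carrier H" and y: "y \<in> carrier H" and "leq H x y"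
  shows "imp H x y = one H"
proof (rule one_leq_imp_eq_one)
  show "imp H x y \<in> carrier H" using x y by (rule imp_closed)
  show "leq H (one H) (imp H x y)"
    using \<open>leq H x y\<close> leq_meet_iff_leq_imp[OF one_closed x y] by (simp add: meet_one_left x)
qed

lemma imp_refl: "x \<in> carrier H \<Longrightarrow> imp H x x = one H"
  by (simp add: imp_eq_one_if_leq leq_refl)

lemma imp_one_right: "x \<in> carrier H \<Longrightarrow> imp H x (one H) = one H"
  by (simp add: imp_eq_one_if_leq leq_def meet_one_right one_closed)

lemma one_imp:
  assumes x: "x \<in> carrier H"
  shows "imp H (one H) x = x"
proof -
  let ?u = "imp H (one H) x"
  have u: "?u \<in> carrier H" using one_closed x by (rule imp_closed)
  have "leq H ?u x"
    using leq_meet_iff_leq_imp[OF u one_closed x] leq_refl[OF u] by (simp add: meet_one_right u)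
  moreover have "leq H x ?u"
    using leq_meet_iff_leq_imp[OF x one_closed x] leq_refl[OF x] by (simp add: meet_one_right x)
  ultimately show ?thesis unfolding leq_def using meet_comm[OF u x] by simp
qed

lemma leq_imp_right:
  assumes y: "y \<in> carrier H" and z: "z \<in> carrier H"
  shows "leq H z (imp H y z)"
proof -
  have "meet H (meet H z y) z = meet H (meet H z z) y"
    using meet_assoc meet_comm y z by metis
  then have "leq H (meet H z y) z" unfolding leq_def by (simp add: meet_idem z)
  then show ?thesis using leq_meet_iff_leq_imp[OF z y z] by simp
qed

lemma normal_closure_upward_closed:
  assumes "x \<in> X" "leq H x a" "a \<in> carrier H"
  shows "a \<in> normal_closure H X"
  unfolding normal_closure_def
proof (rule InterI, clarify)
  fix \<theta> assume \<theta>: "congruence H \<theta>" and X: "X \<subseteq> {a \<in> carrier H. (a, one H) \<in> \<theta>}"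
  have equiv: "equiv (carrier H) \<theta>" using \<theta> unfolding congruence_def by simp
  have x: "x \<in> carrier H" "(x, one H) \<in> \<theta>" using X \<open>x \<in> X\<close> by auto
  have "(a, a) \<in> \<theta>" using equiv \<open>a \<in> carrier H\<close> by (simp add: equiv_def refl_on_def)
  then have "(imp H x a, imp H (one H) a) \<in> \<theta>" using \<theta> x(2) unfolding congruence_def by blast
  then have "(one H, a) \<in> \<theta>" using assms x(1) by (simp add: imp_eq_one_if_leq one_imp)
  then show "a \<in> carrier H \<and> (a, one H) \<in> \<theta>"
    using equiv \<open>a \<in> carrier H\<close> by (auto elim: equivE symE)
qed

end

lemma eval_cong: "(\<And>g. g \<in> gens t \<Longrightarrow> v g = w g) \<Longrightarrow> eval B v t = eval B w t"
  by (induction t) auto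

lemma eval_in_subalg: "subalg A S \<Longrightarrow> (\<And>g. g \<in> gens t \<Longrightarrow> v g \<in> S) \<Longrightarrow> eval A v t \<in> S"
  by (induction t) (auto simp: subalg_def)

lemma hom_on_eval:
  assumes S: "subalg A S" and h: "hom_on h S A B" and v: "\<And>g. g \<in> gens t \<Longrightarrow> v g \<in> S"
  shows "h (eval A v t) = eval B (h \<circ> v) t"
  using v
proof (induction t)
  case (Meet s t)
  then have "eval A v s \<in> S" "eval A v t \<in> S" by (auto intro: eval_in_subalg[OF S])
  with Meet h show ?case by (simp add: hom_on_def)
next
  case (Imp s t)
  then have "eval A v s \<in> S" "eval A v t \<in> S" by (auto intro: eval_in_subalg[OF S])
  with Imp h show ?case by (simp add: hom_on_def)
qed (use h in \<open>simp_all add: hom_on_def\<close>)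

lemma hom_on_mono: "hom_on h S A B \<Longrightarrow> X \<subseteq> S \<Longrightarrow> hom_on h X A B"
  unfolding hom_on_def by blast

lemma in_cosmashI:
  fixes A :: "'a hslat"
  assumes "gens t \<subseteq> copr_gens Xs"
    and "\<And>k (B :: ((nat \<times> 'a) tm set) hslat) h. k < length Xs \<Longrightarrow> is_hsl B \<Longrightarrow>
      (\<And>j. j < length Xs \<Longrightarrow> j \<noteq> k \<Longrightarrow> hom_on (h j) (Xs ! j) A B) \<Longrightarrow>
      eval B (\<lambda>(j, a). if j = k then one B else h j a) t = one B"
  shows "in_cosmash A Xs t"
  using assms unfolding in_cosmash_def by blast

lemma in_cosmashD:
  fixes A :: "'a hslat" and B :: "((nat \<times> 'a) tm set) hslat"
  assumes "in_cosmash A Xs t" "k < length Xs" "is_hsl B"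
    and "\<And>j. j < length Xs \<Longrightarrow> j \<noteq> k \<Longrightarrow> hom_on (h j) (Xs ! j) A B"
  shows "eval B (\<lambda>(j, a). if j = k then one B else h j a) t = one B"
  using assms unfolding in_cosmash_def by blast

lemma gens_in_cosmash: "in_cosmash A Xs t \<Longrightarrow> gens t \<subseteq> copr_gens Xs"
  unfolding in_cosmash_def by blast

lemma eval_in_higgins: "in_cosmash A Xs t \<Longrightarrow> eval A (\<lambda>(j, a). a) t \<in> higgins A Xs"
  unfolding higgins_def by blast

lemma one_in_higgins: "one A \<in> higgins A Xs"
  using eval_in_higgins[of A Xs One] by (simp add: in_cosmash_def)

lemma higgins_neq_one:
  "in_cosmash A Xs t \<Longrightarrow> eval A (\<lambda>(j, a). a) t \<noteq> one A \<Longrightarrow> higgins A Xs \<noteq> {one A}"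
  using eval_in_higgins by fastforce

lemma hom_on_carrier: "hom_on h X A B \<Longrightarrow> x \<in> X \<Longrightarrow> h x \<in> carrier B"
  unfolding hom_on_def by blast

lemma in_cosmash_pair_witness:
  assumes "a \<in> X" "b \<in> Y"
  shows "in_cosmash A [X, Y] (Imp (Imp (Gen (0, a)) (Gen (1, b))) (Gen (1, b)))"
proof (rule in_cosmashI)
  show "gens (Imp (Imp (Gen (0, a)) (Gen (1, b))) (Gen (1, b))) \<subseteq> copr_gens [X, Y]"
    using assms by (simp add: copr_gens_def)
next
  fix k and B :: "((nat \<times> 'a) tm set) hslat" and h
  assume k: "k < length [X, Y]" and "is_hsl B"
    and h: "\<And>j. j < length [X, Y] \<Longrightarrow> j \<noteq> k \<Longrightarrow> hom_on (h j) ([X, Y] ! j) A B"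
  interpret B: heyting_semilattice B by unfold_locales fact
  consider "k = 0" | "k = 1" using k by fastforce
  then show "eval B (\<lambda>(j, a). if j = k then one B else h j a)
      (Imp (Imp (Gen (0, a)) (Gen (1, b))) (Gen (1, b))) = one B"
  proof cases
    case 1
    with h[of 1] assms have "h 1 b \<in> carrier B" by (simp add: hom_on_carrier)
    with 1 show ?thesis by (simp add: B.one_imp B.imp_refl)
  next
    case 2
    with h[of 0] assms have "h 0 a \<in> carrier B" by (simp add: hom_on_carrier)
    with 2 show ?thesis by (simp add: B.imp_one_right B.one_closed)
  qed
qed

lemma in_cosmash_triple_witness:
  assumes "x \<in> X" "y \<in> Y" "z \<in> Z"
  shows "in_cosmash A [X, Y, Z]
    (Imp (Imp (Gen (0, x)) (Gen (2, z))) (Imp (Imp (Gen (1, y)) (Gen (2, z))) (Gen (2, z))))"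
proof (rule in_cosmashI)
  show "gens (Imp (Imp (Gen (0, x)) (Gen (2, z))) (Imp (Imp (Gen (1, y)) (Gen (2, z))) (Gen (2, z))))
      \<subseteq> copr_gens [X, Y, Z]"
    using assms by (simp add: copr_gens_def)
next
  fix k and B :: "((nat \<times> 'a) tm set) hslat" and h
  assume k: "k < length [X, Y, Z]" and "is_hsl B"
    and h: "\<And>j. j < length [X, Y, Z] \<Longrightarrow> j \<noteq> k \<Longrightarrow> hom_on (h j) ([X, Y, Z] ! j) A B"
  interpret B: heyting_semilattice B by unfold_locales fact
  consider "k = 0" | "k = 1" | "k = 2" using k by fastforce
  then show "eval B (\<lambda>(j, a). if j = k then one B else h j a)
      (Imp (Imp (Gen (0, x)) (Gen (2, z))) (Imp (Imp (Gen (1, y)) (Gen (2, z))) (Gen (2, z))))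
    = one B"
  proof cases
    case 1
    with h[of 1] h[of 2] assms have "h 1 y \<in> carrier B" "h 2 z \<in> carrier B"
      by (simp_all add: hom_on_carrier)
    with 1 show ?thesis
      by (simp add: B.one_imp B.imp_eq_one_if_leq B.leq_imp_right B.imp_closed)
  next
    case 2
    with h[of 0] h[of 2] assms have "h 0 x \<in> carrier B" "h 2 z \<in> carrier B"
      by (simp_all add: hom_on_carrier)
    with 2 show ?thesis by (simp add: B.one_imp B.imp_refl B.imp_one_right B.imp_closed)
  next
    case 3
    with h[of 0] h[of 1] assms have "h 0 x \<in> carrier B" "h 1 y \<in> carrier B"
      by (simp_all add: hom_on_carrier)
    with 3 show ?thesis by (simp add: B.imp_one_right B.one_closed)
  qed
qed

text \<open>p and q embed S into B \<times> B with X and Y in different factors.\<close>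

lemma higgins_pair_eq_one_if_separated:
  fixes A :: "'a hslat" and B :: "((nat \<times> 'a) tm set) hslat"
  assumes B: "is_hsl B" and S: "subalg A S" "X \<subseteq> S" "Y \<subseteq> S"
    and p: "hom_on p S A B" "\<And>y. y \<in> Y \<Longrightarrow> p y = one B"
    and q: "hom_on q S A B" "\<And>x. x \<in> X \<Longrightarrow> q x = one B"
    and inj: "inj_on (\<lambda>a. (p a, q a)) S"
  shows "higgins A [X, Y] = {one A}"
proof -
  have "eval A (\<lambda>(j, a). a) t = one A" if t: "in_cosmash A [X, Y] t" for t
  proof -
    let ?v = "\<lambda>(j :: nat, a). a"
    have gens: "(j = 0 \<and> a \<in> X) \<or> (j = 1 \<and> a \<in> Y)" if "(j, a) \<in> gens t" for j a
    proof -
      have "j < 2 \<and> a \<in> [X, Y] ! j"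
        using gens_in_cosmash[OF t] that by (auto simp: copr_gens_def)
      then show ?thesis by (auto simp: less_2_cases_iff)
    qed
    then have v: "\<And>g. g \<in> gens t \<Longrightarrow> ?v g \<in> S" using S by (auto split: prod.split)
    have "p (eval A ?v t) = p (one A)"
    proof -
      have "p (eval A ?v t) = eval B (p \<circ> ?v) t" by (rule hom_on_eval[OF S(1) p(1) v])
      also have "\<dots> = eval B (\<lambda>(j, a). if j = 1 then one B else p a) t"
        using gens p(2) by (intro eval_cong) (auto split: prod.split)
      also have "\<dots> = one B"
      proof (rule in_cosmashD[OF t _ B, of 1 "\<lambda>_. p"])
        fix j assume "j < length [X, Y]" "j \<noteq> 1"
        then show "hom_on p ([X, Y] ! j) A B"
          using hom_on_mono[OF p(1) S(2)] by (auto simp: less_Suc_eq)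
      qed simp
      finally show ?thesis using p(1) by (simp add: hom_on_def)
    qed
    moreover have "q (eval A ?v t) = q (one A)"
    proof -
      have "q (eval A ?v t) = eval B (q \<circ> ?v) t" by (rule hom_on_eval[OF S(1) q(1) v])
      also have "\<dots> = eval B (\<lambda>(j, a). if j = 0 then one B else q a) t"
        using gens q(2) by (intro eval_cong) (auto split: prod.split)
      also have "\<dots> = one B"
      proof (rule in_cosmashD[OF t _ B, of 0 "\<lambda>_. q"])
        fix j assume "j < length [X, Y]" "j \<noteq> 0"
        then show "hom_on q ([X, Y] ! j) A B"
          using hom_on_mono[OF q(1) S(3)] by (auto simp: less_Suc_eq)
      qed simp
      finally show ?thesis using q(1) by (simp add: hom_on_def)
    qed
    moreover have "eval A ?v t \<in> S" "one A \<in> S"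
      using eval_in_subalg[OF S(1) v] S(1) by (auto simp: subalg_def)
    ultimately show ?thesis using inj_onD[OF inj, of "eval A ?v t" "one A"] by simp
  qed
  then have "higgins A [X, Y] \<subseteq> {one A}" by (auto simp: higgins_def)
  with one_in_higgins show ?thesis by blast
qed

definition sq_le :: "nat \<Rightarrow> nat \<Rightarrow> bool" where
  "sq_le x y \<longleftrightarrow> x = 0 \<or> y = 4 \<or> x = y \<or> (y = 3 \<and> (x = 1 \<or> x = 2))"

definition square_with_top :: "nat hslat" where
  "square_with_top = \<lparr>carrier = {0, 1, 2, 3, 4}, one = 4,
     meet = (\<lambda>x y. if sq_le x y then x else if sq_le y x then y else 0),
     imp = (\<lambda>x y. if sq_le x y then 4 else if x = 1 then 2 else if x = 2 then 1 else y)\<rparr>"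

definition two :: "'b set hslat" where
  "two = \<lparr>carrier = {UNIV, {}}, one = UNIV, meet = (\<inter>), imp = (\<lambda>P Q. - P \<union> Q)\<rparr>"

lemma is_hsl_square_with_top: "is_hsl square_with_top"
  unfolding is_hsl_def leq_def square_with_top_def by (simp add: sq_le_def)

lemma is_hsl_two: "is_hsl two"
  by (auto simp: is_hsl_def leq_def two_def)

interpretation square_with_top: heyting_semilattice square_with_top
  by unfold_locales (rule is_hsl_square_with_top)

lemma subalg_square_with_top:
  "c \<in> {1, 2, 3} \<Longrightarrow> subalg square_with_top {4, c}"
  unfolding subalg_def square_with_top_def by (auto simp: sq_le_def)

lemma higgins_square_with_top_pair:
  "higgins square_with_top [{4, 1}, {4, 2}] = {one square_with_top}"
proof (rule higgins_pair_eq_one_if_separated[where B = two and S = "{0, 1, 2, 4}"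
    and p = "\<lambda>a. if a \<in> {2, 4} then UNIV else {}" and q = "\<lambda>a. if a \<in> {1, 4} then UNIV else {}"])
  show "is_hsl two" by (rule is_hsl_two)
qed (auto simp: subalg_def hom_on_def inj_on_def square_with_top_def two_def sq_le_def)

lemma higgins_square_with_top_triple:
  "higgins square_with_top [{4, 1}, {4, 2}, {4, 3}] \<noteq> {one square_with_top}"
  by (rule higgins_neq_one[OF in_cosmash_triple_witness[of 1 _ 2 _ 3]])
    (simp_all add: square_with_top_def sq_le_def)

lemma three_in_normal_closure:
  assumes "c \<in> {1, 2}"
  shows "3 \<in> normal_closure square_with_top {4, c}"
proof (rule square_with_top.normal_closure_upward_closed)
  show "c \<in> {4, c}" by simp
  show "leq square_with_top c 3" "3 \<in> carrier square_with_top"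
    using assms by (auto simp: square_with_top_def sq_le_def leq_def)
qed

lemma higgins_square_with_top_normal_closures:
  "higgins square_with_top
     [normal_closure square_with_top {4, 1}, normal_closure square_with_top {4, 2}]
   \<noteq> {one square_with_top}"
proof (rule higgins_neq_one[OF in_cosmash_pair_witness[of 3 _ 3]])
  show "3 \<in> normal_closure square_with_top {4, 1}" "3 \<in> normal_closure square_with_top {4, 2}"
    by (simp_all add: three_in_normal_closure)
qed (simp add: square_with_top_def sq_le_def)

theorem mainTheorem2:
  shows "(\<exists>(A :: nat hslat) X Y Z. is_hsl A \<and> subalg A X \<and> subalg A Y \<and> subalg A Z \<and>
            higgins A [X, Y] = {one A} \<and> higgins A [X, Y, Z] \<noteq> {one A})
       \<and> (\<exists>(A :: nat hslat) X Y. is_hsl A \<and> subalg A X \<and> subalg A Y \<and>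
            higgins A [X, Y] = {one A} \<and>
            higgins A [normal_closure A X, normal_closure A Y] \<noteq> {one A})"
  using is_hsl_square_with_top subalg_square_with_top higgins_square_with_top_pair
    higgins_square_with_top_triple higgins_square_with_top_normal_closures
  by blast

end
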